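(* Let $n\in\mathbb{N}$ and let $\|\cdot\|_u$ be a unitarily-invariant norm on $\mathbb{M}_n(\mathbb{C})$. Let $N\in\mathbb{M}_n(\mathbb{C})$ be normal and $A\in\mathbb{M}_n(\mathbb{C})$, and suppose $\|p(A)\|_u=\|p(N)\|_u$ for every polynomial $p$ with complex coefficients. Then $A$ is normal. If moreover $\|\cdot\|_u$ separates projections by rank, then $A$ and $N$ are unitarily similar.
   Context: A norm $\|\cdot\|_u$ on $\mathbb{M}_n(\mathbb{C})$ is unitarily-invariant if $\|UXV\|_u=\|X\|_u$ for all $X$ and all unitaries $U,V$. It separates projections by rank if whenever $P,Q$ are orthogonal projections ($P=P^2=P^*$) with $\operatorname{rank}P\ne\operatorname{rank}Q$, then $\|P\|_u\neq\|Q\|_u$. *)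

theory Defs
  imports "HOL-Analysis.Analysis" "HOL-Computational_Algebra.Polynomial"
begin

type_synonym 'n cmat = "complex^'n^'n"

definition cmat_adjoint :: "'n::finite cmat \<Rightarrow> 'n cmat" where
  "cmat_adjoint A = (\<chi> i j. cnj (A $ j $ i))"

definition cmat_scale :: "complex \<Rightarrow> 'n::finite cmat \<Rightarrow> 'n cmat" where
  "cmat_scale c A = (\<chi> i j. c * A $ i $ j)"

definition cmat_unitary :: "'n::finite cmat \<Rightarrow> bool" where
  "cmat_unitary U \<longleftrightarrow> U ** cmat_adjoint U = mat 1 \<and> cmat_adjoint U ** U = mat 1"

definition cmat_normal :: "'n::finite cmat \<Rightarrow> bool" where
  "cmat_normal A \<longleftrightarrow> A ** cmat_adjoint A = cmat_adjoint A ** A"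

definition cmat_projection :: "'n::finite cmat \<Rightarrow> bool" where
  "cmat_projection P \<longleftrightarrow> P ** P = P \<and> cmat_adjoint P = P"

definition cmat_pow :: "'n::finite cmat \<Rightarrow> nat \<Rightarrow> 'n cmat" where
  "cmat_pow A k = ((\<lambda>X. A ** X) ^^ k) (mat 1)"

definition cmat_poly :: "complex poly \<Rightarrow> 'n::finite cmat \<Rightarrow> 'n cmat" where
  "cmat_poly p A = (\<Sum>i\<le>degree p. cmat_scale (coeff p i) (cmat_pow A i))"

definition is_cmat_norm :: "('n::finite cmat \<Rightarrow> real) \<Rightarrow> bool" where
  "is_cmat_norm nu \<longleftrightarrow>
     (\<forall>X. 0 \<le> nu X) \<and> (\<forall>X. nu X = 0 \<longleftrightarrow> X = 0) \<and>
     (\<forall>c X. nu (cmat_scale c X) = cmod c * nu X) \<and>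
     (\<forall>X Y. nu (X + Y) \<le> nu X + nu Y)"

definition unitarily_invariant_norm :: "('n::finite cmat \<Rightarrow> real) \<Rightarrow> bool" where
  "unitarily_invariant_norm nu \<longleftrightarrow> is_cmat_norm nu \<and>
     (\<forall>X U V. cmat_unitary U \<longrightarrow> cmat_unitary V \<longrightarrow> nu (U ** X ** V) = nu X)"

definition separates_projections_by_rank :: "('n::finite cmat \<Rightarrow> real) \<Rightarrow> bool" where
  "separates_projections_by_rank nu \<longleftrightarrow>
     (\<forall>P Q. cmat_projection P \<longrightarrow> cmat_projection Q \<longrightarrow> rank P \<noteq> rank Q \<longrightarrow> nu P \<noteq> nu Q)"

definition unitarily_similar :: "'n::finite cmat \<Rightarrow> 'n cmat \<Rightarrow> bool" where
  "unitarily_similar A B \<longleftrightarrow> (\<exists>U. cmat_unitary U \<and> A = U ** B ** cmat_adjoint U)"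

end

theory Submission
  imports Defs "HOL-Computational_Algebra.Fundamental_Theorem_Algebra"
begin

text \<open>
  Diagonalize \<open>N = U diag(d) U\<^sup>*\<close>. If two polynomials agree on the eigenvalues \<open>d\<^sub>i\<close>, they agree
  at \<open>N\<close>, so their difference has norm \<open>0\<close> at \<open>A\<close> and they agree at \<open>A\<close> too. For the Lagrange
  polynomial \<open>E\<^sub>l\<close> of an eigenvalue \<open>l\<close>, the matrix \<open>S = 2 E\<^sub>l(A) - 1\<close> is therefore an involution,
  with the norm of the unitary \<open>2 E\<^sub>l(N) - 1\<close>, i.e. of the identity. Such an involution is
  Hermitian: its singular values \<open>s\<^sub>i\<close> are also those of \<open>S\<^sup>-\<^sup>1 = S\<close>, i.e. the \<open>1/s\<^sub>i\<close>, so the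
  diagonal matrix of the means \<open>(s\<^sub>i + 1/s\<^sub>i)/2 \<ge> 1\<close> has norm at most that of the identity, which
  forces all \<open>s\<^sub>i = 1\<close>. Hence \<open>A\<^sup>* = \<Sum> cnj(l) E\<^sub>l(A)\<close> is a polynomial in \<open>A\<close>, and \<open>A\<close> is normal.

  The \<open>E\<^sub>l(A)\<close> and \<open>E\<^sub>l(N)\<close> are the spectral projections of \<open>A\<close> and \<open>N\<close> for \<open>l\<close> and have equal
  norms. If the norm separates projections by rank, every eigenvalue has the same multiplicity
  in \<open>A\<close> as in \<open>N\<close>, so the diagonalizations of \<open>A\<close> and \<open>N\<close> differ by a permutation.
\<close>

definition cmat_diag :: "('n::finite \<Rightarrow> complex) \<Rightarrow> 'n cmat" where
  "cmat_diag d = (\<chi> i j. if i = j then d i else 0)"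

lemma cmat_adjoint_nth [simp]: "cmat_adjoint A $ i $ j = cnj (A $ j $ i)"
  by (simp add: cmat_adjoint_def)

lemma cmat_scale_nth [simp]: "cmat_scale c A $ i $ j = c * A $ i $ j"
  by (simp add: cmat_scale_def)

lemma cmat_diag_nth [simp]: "cmat_diag d $ i $ j = (if i = j then d i else 0)"
  by (simp add: cmat_diag_def)

lemma mat_nth: "mat c $ i $ j = (if i = j then c else 0)"
  by (simp add: mat_def)

lemma matrix_matrix_mult_nth: "(A ** B) $ i $ j = (\<Sum>k\<in>UNIV. A $ i $ k * B $ k $ j)"
  by (simp add: matrix_matrix_mult_def)

lemma sum_delta_left_mult:
  "(\<Sum>k\<in>UNIV. (if a = k then (1::'b::semiring_1) else 0) * f k) = f (a::'a::finite)"
proof -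
  have "(\<Sum>k\<in>UNIV. (if a = k then (1::'b) else 0) * f k) = (\<Sum>k\<in>UNIV. if k = a then f a else 0)"
    by (rule sum.cong) auto
  then show ?thesis
    by simp
qed

lemma cmat_adjoint_adjoint [simp]: "cmat_adjoint (cmat_adjoint A) = A"
  by (simp add: vec_eq_iff)

lemma cmat_adjoint_mult: "cmat_adjoint (A ** B) = cmat_adjoint B ** cmat_adjoint A"
  by (simp add: vec_eq_iff matrix_matrix_mult_nth mult.commute)

lemma cmat_adjoint_add: "cmat_adjoint (A + B) = cmat_adjoint A + cmat_adjoint B"
  by (simp add: vec_eq_iff)

lemma cmat_adjoint_diff: "cmat_adjoint (A - B) = cmat_adjoint A - cmat_adjoint B"
  by (simp add: vec_eq_iff)

lemma cmat_adjoint_scale: "cmat_adjoint (cmat_scale c A) = cmat_scale (cnj c) (cmat_adjoint A)"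
  by (simp add: vec_eq_iff)

lemma cmat_adjoint_mat: "cmat_adjoint (mat c) = mat (cnj c)"
  by (simp add: vec_eq_iff mat_nth)

lemma cmat_adjoint_sum: "cmat_adjoint (\<Sum>i\<in>F. f i) = (\<Sum>i\<in>F. cmat_adjoint (f i))"
  by (induct F rule: infinite_finite_induct) (auto simp: cmat_adjoint_add vec_eq_iff)

lemma cmat_adjoint_diag: "cmat_adjoint (cmat_diag d) = cmat_diag (\<lambda>i. cnj (d i))"
  by (simp add: vec_eq_iff)

lemma cmat_scale_mult_left: "cmat_scale c A ** B = cmat_scale c (A ** B)"
  by (simp add: vec_eq_iff matrix_matrix_mult_nth sum_distrib_left mult.assoc)

lemma cmat_scale_mult_right: "A ** cmat_scale c B = cmat_scale c (A ** B)"
  by (simp add: vec_eq_iff matrix_matrix_mult_nth sum_distrib_left mult.left_commute)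

lemma cmat_scale_add_right: "cmat_scale c (A + B) = cmat_scale c A + cmat_scale c B"
  by (simp add: vec_eq_iff distrib_left)

lemma cmat_scale_diff_right: "cmat_scale c (A - B) = cmat_scale c A - cmat_scale c B"
  by (simp add: vec_eq_iff right_diff_distrib)

lemma cmat_scale_add_left: "cmat_scale (c + d) A = cmat_scale c A + cmat_scale d A"
  by (simp add: vec_eq_iff distrib_right)

lemma cmat_scale_diff_left: "cmat_scale (c - d) A = cmat_scale c A - cmat_scale d A"
  by (simp add: vec_eq_iff left_diff_distrib)

lemma cmat_scale_zero_left [simp]: "cmat_scale 0 A = 0"
  by (simp add: vec_eq_iff)

lemma cmat_scale_one [simp]: "cmat_scale 1 A = A"
  by (simp add: vec_eq_iff)

lemma cmat_scale_scale: "cmat_scale c (cmat_scale d A) = cmat_scale (c * d) A"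
  by (simp add: vec_eq_iff)

lemma cmat_scale_sum_right: "cmat_scale c (\<Sum>i\<in>F. f i) = (\<Sum>i\<in>F. cmat_scale c (f i))"
  by (induct F rule: infinite_finite_induct) (auto simp: cmat_scale_add_right vec_eq_iff)

lemma cmat_scale_mat: "cmat_scale c (mat d) = mat (c * d)"
  by (simp add: vec_eq_iff mat_nth)

lemma mat_mult_left: "mat a ** A = cmat_scale a A"
  by (metis cmat_scale_mat cmat_scale_mult_left matrix_mul_lid mult.right_neutral)

lemma mat_mult_right: "A ** mat a = cmat_scale a A"
  by (metis cmat_scale_mat cmat_scale_mult_right matrix_mul_rid mult.right_neutral)

lemma matrix_mult_add_left: "(A + B) ** C = A ** C + B ** C" for A B C :: "'n::finite cmat"
  by (simp add: vec_eq_iff matrix_matrix_mult_nth distrib_right sum.distrib)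

lemma matrix_mult_diff_left: "(A - B) ** C = A ** C - B ** C" for A B C :: "'n::finite cmat"
  by (simp add: vec_eq_iff matrix_matrix_mult_nth left_diff_distrib sum_subtractf)

lemma matrix_mult_diff_right: "C ** (A - B) = C ** A - C ** B" for A B C :: "'n::finite cmat"
  by (simp add: vec_eq_iff matrix_matrix_mult_nth right_diff_distrib sum_subtractf)

lemma matrix_mult_sum_right: "C ** (\<Sum>i\<in>F. f i) = (\<Sum>i\<in>F. C ** f i)" for C :: "'n::finite cmat"
  by (induct F rule: infinite_finite_induct) (auto simp: matrix_add_ldistrib)

lemma cmat_diag_mult: "cmat_diag a ** cmat_diag b = cmat_diag (\<lambda>i. a i * b i)"
proof -
  have "(\<Sum>k\<in>UNIV. (if i = k then a i else 0) * (if k = j then b k else 0)) =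
        (if i = j then a i * b i else 0)" for i j
  proof -
    have "(\<Sum>k\<in>UNIV. (if i = k then a i else 0) * (if k = j then b k else 0)) =
          (\<Sum>k\<in>UNIV. if k = i then (if i = j then a i * b i else 0) else 0)"
      by (rule sum.cong) auto
    then show ?thesis by simp
  qed
  then show ?thesis by (simp add: vec_eq_iff matrix_matrix_mult_nth)
qed

lemma cmat_diag_add: "cmat_diag a + cmat_diag b = cmat_diag (\<lambda>i. a i + b i)"
  by (simp add: vec_eq_iff)

lemma cmat_diag_sum: "(\<Sum>k\<in>F. cmat_diag (f k)) = cmat_diag (\<lambda>i. \<Sum>k\<in>F. f k i)"
  by (induct F rule: infinite_finite_induct) (simp_all add: cmat_diag_add vec_eq_iff)

lemma cmat_diag_0 [simp]: "cmat_diag (\<lambda>_. 0) = 0"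
  by (simp add: vec_eq_iff)

lemma cmat_diag_const: "cmat_diag (\<lambda>_. c) = mat c"
  by (simp add: vec_eq_iff mat_nth)

lemma cmat_diag_eq_0_iff: "cmat_diag a = 0 \<longleftrightarrow> (\<forall>i. a i = 0)"
  by (auto simp: vec_eq_iff)

lemma cmat_unitary_right_inverse: "cmat_unitary U \<Longrightarrow> U ** cmat_adjoint U = mat 1"
  and cmat_unitary_left_inverse: "cmat_unitary U \<Longrightarrow> cmat_adjoint U ** U = mat 1"
  by (auto simp: cmat_unitary_def)

lemma cmat_unitary_iff_left_inverse: "cmat_unitary U \<longleftrightarrow> cmat_adjoint U ** U = mat 1"
  unfolding cmat_unitary_def by (metis matrix_left_right_inverse)

lemma cmat_unitary_mat1: "cmat_unitary (mat 1)"
  by (simp add: cmat_unitary_iff_left_inverse cmat_adjoint_mat)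

lemma cmat_unitary_adjoint: "cmat_unitary U \<Longrightarrow> cmat_unitary (cmat_adjoint U)"
  by (auto simp: cmat_unitary_def)

lemma cmat_unitary_mult:
  assumes "cmat_unitary U" and "cmat_unitary V"
  shows "cmat_unitary (U ** V)"
proof -
  have "cmat_adjoint (U ** V) ** (U ** V) = cmat_adjoint V ** (cmat_adjoint U ** U) ** V"
    by (simp add: cmat_adjoint_mult matrix_mul_assoc)
  also have "\<dots> = mat 1"
    using assms by (simp add: cmat_unitary_left_inverse)
  finally show ?thesis
    by (simp add: cmat_unitary_iff_left_inverse)
qed

lemma cmat_unitary_diag:
  assumes "\<And>i. cmod (e i) = 1"
  shows "cmat_unitary (cmat_diag e)"
proof -
  have "cnj (e i) * e i = 1" for i
    using complex_norm_square[of "e i"] assms[of i] by (simp add: mult.commute)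
  then show ?thesis
    by (simp add: cmat_unitary_iff_left_inverse cmat_adjoint_diag cmat_diag_mult
        cmat_diag_const[symmetric])
qed

lemma cmat_unitary_conj_cancel:
  assumes "cmat_unitary U"
  shows "cmat_adjoint U ** (U ** X ** cmat_adjoint U) ** U = X"
proof -
  have "cmat_adjoint U ** (U ** X ** cmat_adjoint U) ** U =
        (cmat_adjoint U ** U) ** X ** (cmat_adjoint U ** U)"
    by (simp only: matrix_mul_assoc)
  then show ?thesis
    using assms by (simp add: cmat_unitary_left_inverse)
qed

lemma cmat_unitary_conj_mult:
  assumes "cmat_unitary U"
  shows "(U ** X ** cmat_adjoint U) ** (U ** Y ** cmat_adjoint U) = U ** (X ** Y) ** cmat_adjoint U"
proof -
  have "(U ** X ** cmat_adjoint U) ** (U ** Y ** cmat_adjoint U) =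
        U ** X ** (cmat_adjoint U ** U) ** Y ** cmat_adjoint U"
    by (simp add: matrix_mul_assoc)
  then show ?thesis
    using assms by (simp add: cmat_unitary_left_inverse matrix_mul_assoc)
qed

lemma is_cmat_norm_nonneg: "is_cmat_norm nu \<Longrightarrow> 0 \<le> nu X"
  and is_cmat_norm_eq_0_iff: "is_cmat_norm nu \<Longrightarrow> nu X = 0 \<longleftrightarrow> X = 0"
  and is_cmat_norm_scale: "is_cmat_norm nu \<Longrightarrow> nu (cmat_scale c X) = cmod c * nu X"
  and is_cmat_norm_triangle: "is_cmat_norm nu \<Longrightarrow> nu (X + Y) \<le> nu X + nu Y"
  by (simp_all add: is_cmat_norm_def)

lemma is_cmat_norm_scale_real: "is_cmat_norm nu \<Longrightarrow> nu (cmat_scale (of_real r) X) = \<bar>r\<bar> * nu X"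
  by (simp add: is_cmat_norm_scale)

lemma is_cmat_norm_sum:
  assumes "is_cmat_norm nu"
  shows "nu (\<Sum>i\<in>F. f i) \<le> (\<Sum>i\<in>F. nu (f i))"
proof (induct F rule: infinite_finite_induct)
  case (insert x F)
  then show ?case
    using is_cmat_norm_triangle[OF assms, of "f x" "sum f F"] by simp
qed (use is_cmat_norm_eq_0_iff[OF assms, of 0] in simp_all)

lemma is_cmat_norm_mat1_pos: "is_cmat_norm nu \<Longrightarrow> 0 < nu (mat 1 :: 'n::finite cmat)"
  by (metis is_cmat_norm_eq_0_iff is_cmat_norm_nonneg less_eq_real_def mat_nth one_neq_zero
      zero_index)

lemma unitarily_invariant_norm_is_cmat_norm: "unitarily_invariant_norm nu \<Longrightarrow> is_cmat_norm nu"
  by (simp add: unitarily_invariant_norm_def)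

lemma unitarily_invariant_norm_mult:
  "unitarily_invariant_norm nu \<Longrightarrow> cmat_unitary U \<Longrightarrow> cmat_unitary V \<Longrightarrow> nu (U ** X ** V) = nu X"
  by (simp add: unitarily_invariant_norm_def)

lemma unitarily_invariant_norm_unitary:
  assumes "unitarily_invariant_norm nu" and "cmat_unitary U"
  shows "nu U = nu (mat 1)"
  using unitarily_invariant_norm_mult[OF assms cmat_unitary_mat1, of "mat 1"] by simp

section \<open>Polynomials of a matrix\<close>

lemma cmat_pow_0 [simp]: "cmat_pow A 0 = mat 1"
  by (simp add: cmat_pow_def)

lemma cmat_pow_Suc: "cmat_pow A (Suc k) = A ** cmat_pow A k"
  by (simp add: cmat_pow_def)

lemma cmat_poly_altdef:
  assumes "degree p \<le> m"
  shows "cmat_poly p A = (\<Sum>i\<le>m. cmat_scale (coeff p i) (cmat_pow A i))"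
  unfolding cmat_poly_def
proof (rule sum.mono_neutral_left)
  show "\<forall>i\<in>{..m} - {..degree p}. cmat_scale (coeff p i) (cmat_pow A i) = 0"
    by (auto simp: coeff_eq_0)
qed (use assms in auto)

lemma cmat_poly_add: "cmat_poly (p + q) A = cmat_poly p A + cmat_poly q A"
proof -
  let ?m = "max (degree p) (degree q)"
  have "cmat_poly (p + q) A = (\<Sum>i\<le>?m. cmat_scale (coeff (p + q) i) (cmat_pow A i))"
    by (rule cmat_poly_altdef) (rule degree_add_le; simp)
  also have "\<dots> = (\<Sum>i\<le>?m. cmat_scale (coeff p i) (cmat_pow A i)) +
                   (\<Sum>i\<le>?m. cmat_scale (coeff q i) (cmat_pow A i))"
    by (simp add: cmat_scale_add_left sum.distrib)
  also have "\<dots> = cmat_poly p A + cmat_poly q A"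
    by (simp add: cmat_poly_altdef[symmetric])
  finally show ?thesis .
qed

lemma cmat_poly_diff: "cmat_poly (p - q) A = cmat_poly p A - cmat_poly q A"
proof -
  let ?m = "max (degree p) (degree q)"
  have "cmat_poly (p - q) A = (\<Sum>i\<le>?m. cmat_scale (coeff (p - q) i) (cmat_pow A i))"
    by (rule cmat_poly_altdef) (rule degree_diff_le; simp)
  also have "\<dots> = (\<Sum>i\<le>?m. cmat_scale (coeff p i) (cmat_pow A i)) -
                   (\<Sum>i\<le>?m. cmat_scale (coeff q i) (cmat_pow A i))"
    by (simp add: cmat_scale_diff_left sum_subtractf)
  also have "\<dots> = cmat_poly p A - cmat_poly q A"
    by (simp add: cmat_poly_altdef[symmetric])
  finally show ?thesis .
qed

lemma cmat_poly_smult: "cmat_poly (smult c p) A = cmat_scale c (cmat_poly p A)"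
proof -
  have "cmat_poly (smult c p) A = (\<Sum>i\<le>degree p. cmat_scale (coeff (smult c p) i) (cmat_pow A i))"
    by (rule cmat_poly_altdef) (rule degree_smult_le)
  also have "\<dots> = cmat_scale c (cmat_poly p A)"
    by (simp add: cmat_poly_def cmat_scale_sum_right cmat_scale_scale)
  finally show ?thesis .
qed

lemma cmat_poly_0 [simp]: "cmat_poly 0 A = 0"
  by (simp add: cmat_poly_def)

lemma cmat_poly_const: "cmat_poly [:c:] A = mat c"
  by (simp add: cmat_poly_def cmat_scale_mat)

lemma cmat_poly_1: "cmat_poly 1 A = mat 1"
  by (simp add: one_pCons cmat_poly_const)

lemma cmat_poly_pCons_0: "cmat_poly (pCons 0 p) A = A ** cmat_poly p A"
proof -
  have "cmat_poly (pCons 0 p) A =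
        (\<Sum>i\<le>Suc (degree p). cmat_scale (coeff (pCons 0 p) i) (cmat_pow A i))"
    by (rule cmat_poly_altdef) (simp add: degree_pCons_le)
  also have "\<dots> = (\<Sum>i\<le>degree p. cmat_scale (coeff (pCons 0 p) (Suc i)) (cmat_pow A (Suc i)))"
    by (subst sum.atMost_Suc_shift) simp
  also have "\<dots> = A ** cmat_poly p A"
    by (simp add: cmat_poly_def cmat_pow_Suc cmat_scale_mult_right matrix_mult_sum_right)
  finally show ?thesis .
qed

lemma cmat_poly_pCons: "cmat_poly (pCons a p) A = mat a + A ** cmat_poly p A"
proof -
  have "pCons a p = [:a:] + pCons 0 p"
    by simp
  then show ?thesis
    by (simp only: cmat_poly_add cmat_poly_const cmat_poly_pCons_0)
qed

lemma cmat_poly_x: "cmat_poly [:0, 1:] A = A"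
  by (simp add: cmat_poly_pCons_0 cmat_poly_const del: pCons_0_0)

lemma cmat_poly_linear: "cmat_poly [:-z, 1:] A = A - mat z"
  by (simp add: cmat_poly_pCons cmat_poly_1 vec_eq_iff mat_nth)

lemma cmat_poly_monom: "cmat_poly (monom c j) A = cmat_scale c (cmat_pow A j)"
proof -
  have "cmat_poly (monom 1 j) A = cmat_pow A j"
    by (induct j) (simp_all add: monom_Suc cmat_poly_pCons_0 cmat_pow_Suc cmat_poly_1 del: pCons_0_0)
  then show ?thesis
    by (metis cmat_poly_smult mult.right_neutral smult_monom)
qed

lemma cmat_poly_mult: "cmat_poly (p * q) A = cmat_poly p A ** cmat_poly q A"
proof (induct p)
  case (pCons a p)
  have "cmat_poly (pCons a p * q) A = cmat_poly (smult a q + pCons 0 (p * q)) A"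
    by (simp only: mult_pCons_left)
  also have "\<dots> = cmat_scale a (cmat_poly q A) + A ** (cmat_poly p A ** cmat_poly q A)"
    by (simp only: cmat_poly_add cmat_poly_smult cmat_poly_pCons_0 pCons(2))
  also have "\<dots> = cmat_poly (pCons a p) A ** cmat_poly q A"
    by (simp add: cmat_poly_pCons matrix_mult_add_left mat_mult_left matrix_mul_assoc)
  finally show ?case .
qed simp

lemma cmat_poly_commute: "cmat_poly p A ** cmat_poly q A = cmat_poly q A ** cmat_poly p A"
  by (metis cmat_poly_mult mult.commute)

lemma cmat_poly_sum: "cmat_poly (\<Sum>i\<in>F. f i) A = (\<Sum>i\<in>F. cmat_poly (f i) A)"
  by (induct F rule: infinite_finite_induct) (simp_all add: cmat_poly_add)

lemma cmat_poly_unitary_conj: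
  assumes "cmat_unitary U"
  shows "cmat_poly p (U ** D ** cmat_adjoint U) = U ** cmat_poly p D ** cmat_adjoint U"
proof (induct p)
  case (pCons a p)
  have "U ** mat a ** cmat_adjoint U = mat a"
    using assms by (simp add: mat_mult_right cmat_scale_mult_left cmat_unitary_right_inverse
        cmat_scale_mat)
  then show ?case
    by (simp add: cmat_poly_pCons pCons(2) matrix_add_ldistrib matrix_mult_add_left
        cmat_unitary_conj_mult[OF assms])
qed simp

lemma cmat_poly_diag: "cmat_poly p (cmat_diag d) = cmat_diag (\<lambda>i. poly p (d i))"
  by (induct p) (simp_all add: cmat_poly_pCons cmat_diag_mult cmat_diag_const[symmetric] cmat_diag_add)

lemma cmat_poly_unitary_conj_diag:
  "cmat_unitary U \<Longrightarrow>
   cmat_poly p (U ** cmat_diag d ** cmat_adjoint U) = U ** cmat_diag (\<lambda>i. poly p (d i)) ** cmat_adjoint U"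
  by (simp add: cmat_poly_unitary_conj cmat_poly_diag)

section \<open>The spectral theorem for normal matrices\<close>

definition cinner :: "complex^'n::finite \<Rightarrow> complex^'n \<Rightarrow> complex" where
  "cinner x y = (\<Sum>i\<in>UNIV. x $ i * cnj (y $ i))"

lemma cinner_zero_left [simp]: "cinner 0 z = 0"
  by (simp add: cinner_def)

lemma cinner_add_left: "cinner (x + y) z = cinner x z + cinner y z"
  by (simp add: cinner_def distrib_right sum.distrib)

lemma cinner_scale_left: "cinner (c *s x) z = c * cinner x z"
  by (simp add: cinner_def sum_distrib_left mult.assoc)

lemma cinner_scale_right: "cinner x (c *s z) = cnj c * cinner x z"
  by (simp add: cinner_def sum_distrib_left mult.left_commute)

lemma cinner_commute: "cinner y x = cnj (cinner x y)"
  by (simp add: cinner_def mult.commute)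

lemma cinner_self: "cinner x x = of_real ((norm x)\<^sup>2)"
proof -
  have "(norm x)\<^sup>2 = (\<Sum>i\<in>UNIV. (norm (x $ i))\<^sup>2)"
    by (simp add: power2_norm_eq_inner inner_vec_def)
  then show ?thesis
    by (simp only: cinner_def of_real_sum complex_norm_square)
qed

lemma cinner_self_eq_0_iff: "cinner x x = 0 \<longleftrightarrow> x = 0"
  by (simp add: cinner_self)

lemma cinner_matrix_vector_mult: "cinner (M *v x) y = cinner x (cmat_adjoint M *v y)"
proof -
  have "cinner (M *v x) y = (\<Sum>i\<in>UNIV. \<Sum>j\<in>UNIV. M $ i $ j * x $ j * cnj (y $ i))"
    by (simp add: cinner_def matrix_vector_mult_def sum_distrib_right)
  also have "\<dots> = (\<Sum>j\<in>UNIV. \<Sum>i\<in>UNIV. M $ i $ j * x $ j * cnj (y $ i))"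
    by (rule sum.swap)
  also have "\<dots> = cinner x (cmat_adjoint M *v y)"
    by (simp add: cinner_def matrix_vector_mult_def sum_distrib_left mult_ac)
  finally show ?thesis .
qed

lemma mat_mult_vec: "mat c *v x = c *s x"
  by (simp add: vec_eq_iff matrix_vector_mult_def mat_def if_distrib if_distribR cong: if_cong)

lemma cmat_scale_mult_vec: "cmat_scale c M *v x = c *s (M *v x)"
  by (simp add: vec_eq_iff matrix_vector_mult_def sum_distrib_left mult.assoc)

lemma matrix_vector_mult_scale: "M *v (c *s x) = c *s (M *v x)" for M :: "'n::finite cmat"
  by (simp add: vec_eq_iff matrix_vector_mult_def sum_distrib_left mult.left_commute[of c])

lemma sum_matrix_vector_mult: "(\<Sum>i\<in>F. f i) *v x = (\<Sum>i\<in>F. f i *v x)"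
  for f :: "_ \<Rightarrow> 'n::finite cmat"
  by (induct F rule: infinite_finite_induct) (simp_all add: matrix_vector_mult_add_rdistrib)

lemma cmat_poly_annihilates_vector:
  fixes N :: "'n::finite cmat"
  shows "\<exists>p. p \<noteq> 0 \<and> cmat_poly p N *v v = 0"
proof -
  \<comment> \<open>the vectors \<open>N\<^sup>k v\<close>, \<open>k \<le> CARD('n)\<close>, are linearly dependent\<close>
  let ?n = "CARD('n)"
  define g where "g k = cmat_pow N k *v v" for k
  show ?thesis
  proof (cases "inj_on g {..?n}")
    case False
    then obtain i j where ij: "i \<noteq> j" "g i = g j"
      unfolding inj_on_def by blast
    let ?p = "monom (1::complex) i - monom 1 j"
    have "coeff ?p i = 1"
      using ij by simp
    then have "?p \<noteq> 0"
      by (metis coeff_0 zero_neq_one)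
    moreover have "cmat_poly ?p N *v v = 0"
      using ij by (simp add: cmat_poly_diff cmat_poly_monom g_def matrix_vector_mult_diff_rdistrib)
    ultimately show ?thesis
      by blast
  next
    case True
    define S where "S = g ` {..?n}"
    have "vec.dependent S"
    proof (rule ccontr)
      assume "vec.independent S"
      then have "card S \<le> ?n"
        using vec.independent_bound_general dim_subset_UNIV_cart_gen order_trans by blast
      then show False
        using True by (simp add: S_def card_image)
    qed
    then obtain u where u: "\<exists>x\<in>S. u x \<noteq> 0" "(\<Sum>x\<in>S. u x *s x) = 0"
      using vec.dependent_finite[of S] by (auto simp: S_def)
    define p where "p = (\<Sum>k\<le>?n. monom (u (g k)) k)"
    have "coeff p k = u (g k)" if "k \<le> ?n" for k
      using that by (simp add: p_def coeff_sum coeff_monom)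
    moreover obtain k where "k \<le> ?n" "u (g k) \<noteq> 0"
      using u(1) by (auto simp: S_def)
    ultimately have "p \<noteq> 0"
      by force
    moreover have "cmat_poly p N *v v = (\<Sum>k\<le>?n. u (g k) *s g k)"
      by (simp add: p_def cmat_poly_sum sum_matrix_vector_mult cmat_poly_monom cmat_scale_mult_vec g_def)
    moreover have "(\<Sum>k\<le>?n. u (g k) *s g k) = (\<Sum>x\<in>S. u x *s x)"
      unfolding S_def using True by (simp add: sum.reindex)
    ultimately show ?thesis
      using u(2) by auto
  qed
qed

lemma eigenvector_of_annihilating_poly:
  fixes N :: "'n::finite cmat"
  assumes "vec.subspace W" and "\<And>x. x \<in> W \<Longrightarrow> N *v x \<in> W"
  shows "p \<noteq> 0 \<Longrightarrow> v \<in> W \<Longrightarrow> v \<noteq> 0 \<Longrightarrow> cmat_poly p N *v v = 0 \<Longrightarrow>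
         \<exists>w \<mu>. w \<in> W \<and> w \<noteq> 0 \<and> N *v w = \<mu> *s w"
proof (induct "degree p" arbitrary: p v rule: less_induct)
  case less
  show ?case
  proof (cases "degree p = 0")
    case True
    then have "p = [:coeff p 0:]" and "coeff p 0 \<noteq> 0"
      using degree_0_id less.prems(1) by (metis, metis leading_coeff_0_iff)
    then show ?thesis
      using less.prems by (metis cmat_poly_const mat_mult_vec vector_mul_eq_0)
  next
    case False
    \<comment> \<open>split off a linear factor \<open>x - z\<close> of \<open>p\<close> and apply it to \<open>v\<close> first\<close>
    then have "\<not> constant (poly p)"
      by (simp add: constant_degree)
    then obtain z where "poly p z = 0"
      using fundamental_theorem_of_algebra by blast
    then obtain q where pq: "p = [:-z, 1:] * q"
      by (auto simp: poly_eq_0_iff_dvd dvd_def)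
    with less.prems(1) have q: "q \<noteq> 0"
      by auto
    have "degree p = degree [:-z, 1:] + degree q"
      unfolding pq by (rule degree_mult_eq) (use q in auto)
    then have dq: "degree q < degree p"
      by simp
    define w where "w = (N - mat z) *v v"
    have "cmat_poly p N = cmat_poly q N ** (N - mat z)"
      by (metis pq cmat_poly_mult cmat_poly_commute cmat_poly_linear)
    then have qw: "cmat_poly q N *v w = 0"
      using less.prems(4) by (simp add: w_def matrix_vector_mul_assoc)
    have wW: "w \<in> W"
      using assms less.prems(2)
      by (simp add: w_def matrix_vector_mult_diff_rdistrib mat_mult_vec vec.subspace_diff
          vec.subspace_scale)
    show ?thesis
    proof (cases "w = 0")
      case True
      then have "N *v v = z *s v"
        by (simp add: w_def matrix_vector_mult_diff_rdistrib mat_mult_vec)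
      then show ?thesis
        using less.prems by blast
    next
      case False
      then show ?thesis
        using less.hyps[OF dq q wW False qw] by blast
    qed
  qed
qed

lemma invariant_subspace_has_eigenvector:
  fixes N :: "'n::finite cmat"
  assumes "vec.subspace W" and "\<And>x. x \<in> W \<Longrightarrow> N *v x \<in> W" and "v \<in> W" "v \<noteq> 0"
  shows "\<exists>w \<mu>. w \<in> W \<and> w \<noteq> 0 \<and> N *v w = \<mu> *s w"
  using eigenvector_of_annihilating_poly[OF assms(1,2)] cmat_poly_annihilates_vector[of N v]
    assms(3,4) by blast

lemma normal_eigenvector_adjoint:
  assumes "cmat_normal N" and "N *v v = \<mu> *s v"
  shows "cmat_adjoint N *v v = cnj \<mu> *s v"
proof -
  \<comment> \<open>\<open>M = N - \<mu>\<close> is normal, so \<open>\<parallel>M\<^sup>* v\<parallel> = \<parallel>M v\<parallel> = 0\<close>\<close>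
  define M where "M = N - mat \<mu>"
  have adjM: "cmat_adjoint M = cmat_adjoint N - mat (cnj \<mu>)"
    by (simp add: M_def cmat_adjoint_diff cmat_adjoint_mat)
  have Mv: "M *v v = 0"
    using assms(2) by (simp add: M_def matrix_vector_mult_diff_rdistrib mat_mult_vec)
  let ?R = "cmat_scale (cnj \<mu>) N + cmat_scale \<mu> (cmat_adjoint N) - mat (\<mu> * cnj \<mu>)"
  have "M ** cmat_adjoint M = N ** cmat_adjoint N - ?R" and "cmat_adjoint M ** M = cmat_adjoint N ** N - ?R"
    unfolding adjM unfolding M_def
    by (simp_all add: matrix_mult_diff_left matrix_mult_diff_right mat_mult_left mat_mult_right
        cmat_scale_mat cmat_scale_diff_right mult.commute)
  then have "M ** cmat_adjoint M = cmat_adjoint M ** M"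
    using assms(1) by (simp add: cmat_normal_def)
  then have "cinner (cmat_adjoint M *v v) (cmat_adjoint M *v v) = cinner v (cmat_adjoint M *v (M *v v))"
    by (simp add: cinner_matrix_vector_mult matrix_vector_mul_assoc)
  also have "\<dots> = 0"
    using Mv by (simp add: cinner_def)
  finally have "cmat_adjoint M *v v = 0"
    by (simp add: cinner_self_eq_0_iff)
  then show ?thesis
    by (simp add: adjM matrix_vector_mult_diff_rdistrib mat_mult_vec)
qed

lemma orthogonal_complement_nonzero:
  fixes f :: "'n::finite \<Rightarrow> complex^'n"
  assumes "a \<notin> F"
  shows "\<exists>x. x \<noteq> 0 \<and> (\<forall>i\<in>F. cinner x (f i) = 0)"
proof -
  define M :: "'n cmat" where "M = (\<chi> j k. if j \<in> F then cnj (f j $ k) else 0)"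
  have Mx: "(M *v x) $ j = (if j \<in> F then cinner x (f j) else 0)" for x j
    by (simp add: M_def matrix_vector_mult_def cinner_def mult.commute)
  have "\<not> surj ((*v) M)"
    using assms by (metis Mx axis_nth surjD zero_neq_one)
  then have "\<not> inj ((*v) M)"
    using vec.linear_inj_imp_surj[OF matrix_vector_mul_linear_gen] by blast
  then obtain x y where "x \<noteq> y" "M *v (x - y) = 0"
    unfolding inj_def by (auto simp: matrix_vector_mult_diff_distrib)
  then show ?thesis
    by (metis Mx eq_iff_diff_eq_0 zero_index)
qed

lemma normal_orthogonal_unit_eigenvector:
  fixes N :: "'n::finite cmat" and f :: "'n \<Rightarrow> complex^'n"
  assumes "cmat_normal N" and "a \<notin> F" and eig: "\<And>i. i \<in> F \<Longrightarrow> N *v f i = \<mu> i *s f i"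
  shows "\<exists>e lam. cinner e e = 1 \<and> N *v e = lam *s e \<and> (\<forall>i\<in>F. cinner e (f i) = 0)"
proof -
  define W where "W = {x. \<forall>i\<in>F. cinner x (f i) = 0}"
  have W: "vec.subspace W"
    by (simp add: vec.subspace_def W_def cinner_add_left cinner_scale_left)
  have "N *v x \<in> W" if "x \<in> W" for x
  proof -
    have "cinner (N *v x) (f i) = 0" if "i \<in> F" for i
      using \<open>x \<in> W\<close> that normal_eigenvector_adjoint[OF assms(1) eig[OF that]]
      by (simp add: W_def cinner_matrix_vector_mult cinner_scale_right)
    then show ?thesis
      by (simp add: W_def)
  qed
  moreover obtain v where "v \<noteq> 0" "v \<in> W"
    using orthogonal_complement_nonzero[OF assms(2), of f] by (auto simp: W_def)
  ultimately obtain w lam where w: "w \<in> W" "w \<noteq> 0" "N *v w = lam *s w"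
    using invariant_subspace_has_eigenvector[OF W] by blast
  define e where "e = of_real (1 / norm w) *s w"
  have "cinner e e = of_real (1 / norm w) * of_real (1 / norm w) * of_real ((norm w)\<^sup>2)"
    unfolding e_def cinner_scale_left cinner_scale_right cinner_self[of w] by simp
  then have "cinner e e = 1"
    using w(2) by (simp add: power2_eq_square)
  moreover have "N *v e = lam *s e"
    by (simp add: e_def w(3) matrix_vector_mult_scale mult.commute)
  moreover have "e \<in> W"
    using W w(1) by (simp add: e_def vec.subspace_scale)
  ultimately show ?thesis
    by (auto simp: W_def)
qed

lemma normal_orthonormal_eigenvectors:
  fixes N :: "'n::finite cmat" and F :: "'n set"
  assumes "cmat_normal N" and "finite F"
  shows "\<exists>f \<mu>. (\<forall>i\<in>F. cinner (f i) (f i) = 1 \<and> N *v f i = \<mu> i *s f i) \<and>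
               (\<forall>i\<in>F. \<forall>j\<in>F. i \<noteq> j \<longrightarrow> cinner (f i) (f j) = 0)"
  using assms(2)
proof (induct F rule: finite_induct)
  case (insert a F)
  from insert.hyps(3) obtain f \<mu> where f: "\<forall>i\<in>F. cinner (f i) (f i) = 1 \<and> N *v f i = \<mu> i *s f i"
    and orth: "\<forall>i\<in>F. \<forall>j\<in>F. i \<noteq> j \<longrightarrow> cinner (f i) (f j) = 0"
    by iprover
  obtain e lam where e: "cinner e e = 1" "N *v e = lam *s e" "\<forall>i\<in>F. cinner e (f i) = 0"
    using normal_orthogonal_unit_eigenvector[OF assms(1) insert(2), of f \<mu>] f by blast
  have "\<forall>i\<in>F. cinner (f i) e = 0"
    using e(3) cinner_commute[of "f _" e] by simp
  define f' where "f' = f(a := e)"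
  define \<mu>' where "\<mu>' = \<mu>(a := lam)"
  have "\<forall>i\<in>insert a F. cinner (f' i) (f' i) = 1 \<and> N *v f' i = \<mu>' i *s f' i"
    using f e insert(2) by (auto simp: f'_def \<mu>'_def)
  moreover have "\<forall>i\<in>insert a F. \<forall>j\<in>insert a F. i \<noteq> j \<longrightarrow> cinner (f' i) (f' j) = 0"
    using orth e(3) \<open>\<forall>i\<in>F. cinner (f i) e = 0\<close> insert(2) by (auto simp: f'_def)
  ultimately show ?case
    by blast
qed simp

theorem normal_unitarily_diagonalizable:
  fixes N :: "'n::finite cmat"
  assumes "cmat_normal N"
  shows "\<exists>U d. cmat_unitary U \<and> N = U ** cmat_diag d ** cmat_adjoint U"
proof -
  obtain f :: "'n \<Rightarrow> complex^'n" and \<mu>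
    where f: "\<forall>i. cinner (f i) (f i) = 1 \<and> N *v f i = \<mu> i *s f i"
      and orth: "\<forall>i j. i \<noteq> j \<longrightarrow> cinner (f i) (f j) = 0"
    using normal_orthonormal_eigenvectors[OF assms, of UNIV] by auto
  define U :: "'n cmat" where "U = (\<chi> r c. f c $ r)"
  have "(cmat_adjoint U ** U) $ i $ j = cinner (f j) (f i)" for i j
    by (simp add: U_def matrix_matrix_mult_nth cinner_def mult.commute)
  then have U: "cmat_unitary U"
    using f orth by (auto simp: cmat_unitary_iff_left_inverse vec_eq_iff mat_def)
  have "(N ** U) $ r $ c = (N *v f c) $ r" for r c
    by (simp add: U_def matrix_matrix_mult_nth matrix_vector_mult_def)
  moreover have "(U ** cmat_diag \<mu>) $ r $ c = \<mu> c * f c $ r" for r c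
    by (simp add: U_def matrix_matrix_mult_nth if_distrib if_distribR mult.commute cong: if_cong)
  ultimately have "N ** U = U ** cmat_diag \<mu>"
    using f by (simp add: vec_eq_iff)
  then have "N = U ** cmat_diag \<mu> ** cmat_adjoint U"
    using U by (metis cmat_unitary_right_inverse matrix_mul_assoc matrix_mul_rid)
  then show ?thesis
    using U by blast
qed

section \<open>Norm inequalities for diagonal matrices\<close>

definition perm_cmat :: "('n::finite \<Rightarrow> 'n) \<Rightarrow> 'n cmat" where
  "perm_cmat \<sigma> = (\<chi> i j. if \<sigma> i = j then 1 else 0)"

lemma cmat_unitary_perm_cmat:
  assumes "inj \<sigma>"
  shows "cmat_unitary (perm_cmat \<sigma>)"
proof -
  have "(perm_cmat \<sigma> ** cmat_adjoint (perm_cmat \<sigma>)) $ i $ j = (if \<sigma> j = \<sigma> i then 1 else 0)" for i j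
    by (simp add: perm_cmat_def matrix_matrix_mult_nth sum_delta_left_mult[of "\<sigma> i"])
  then have "perm_cmat \<sigma> ** cmat_adjoint (perm_cmat \<sigma>) = mat 1"
    using assms by (auto simp: vec_eq_iff mat_def inj_eq)
  then show ?thesis
    unfolding cmat_unitary_def using matrix_left_right_inverse by metis
qed

lemma perm_cmat_conj_diag:
  assumes "inj \<sigma>"
  shows "perm_cmat \<sigma> ** cmat_diag d ** cmat_adjoint (perm_cmat \<sigma>) = cmat_diag (\<lambda>i. d (\<sigma> i))"
proof -
  have adjP: "cmat_adjoint (perm_cmat \<sigma>) $ l $ j = (if \<sigma> j = l then 1 else 0)" for l j
    by (simp add: perm_cmat_def)
  have PD: "(perm_cmat \<sigma> ** cmat_diag d) $ i $ l = (if \<sigma> i = l then 1 else 0) * d l" for i l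
    by (simp add: perm_cmat_def matrix_matrix_mult_nth sum_delta_left_mult[of "\<sigma> i"])
  have "(perm_cmat \<sigma> ** cmat_diag d ** cmat_adjoint (perm_cmat \<sigma>)) $ i $ j =
        (\<Sum>l\<in>UNIV. (if \<sigma> j = l then 1 else 0) * (perm_cmat \<sigma> ** cmat_diag d) $ i $ l)" for i j
    unfolding matrix_matrix_mult_nth[of "perm_cmat \<sigma> ** cmat_diag d"] adjP
    by (simp only: mult.commute)
  then have "(perm_cmat \<sigma> ** cmat_diag d ** cmat_adjoint (perm_cmat \<sigma>)) $ i $ j =
        (perm_cmat \<sigma> ** cmat_diag d) $ i $ (\<sigma> j)" for i j
    by (simp only: sum_delta_left_mult)
  then show ?thesis
    using assms by (simp add: vec_eq_iff PD inj_eq)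
qed

lemma unitarily_invariant_norm_diag_scale_le:
  assumes nu: "unitarily_invariant_norm nu" and "\<bar>a\<bar> \<le> 1"
  shows "nu (cmat_diag (x(k := of_real a * x k))) \<le> nu (cmat_diag x)"
proof -
  \<comment> \<open>\<open>diag (x(k := a x\<^sub>k))\<close> is a convex combination of \<open>diag x\<close> and its sign flip at \<open>k\<close>\<close>
  have n: "is_cmat_norm nu"
    using nu by (rule unitarily_invariant_norm_is_cmat_norm)
  define e where "e = (\<lambda>i. if i = k then (-1::complex) else 1)"
  have e: "cmat_unitary (cmat_diag e)"
    by (rule cmat_unitary_diag) (simp add: e_def)
  have eq: "cmat_diag (x(k := of_real a * x k)) =
        cmat_scale (of_real ((1 + a) / 2)) (cmat_diag x) +
        cmat_scale (of_real ((1 - a) / 2)) (cmat_diag e ** cmat_diag x ** mat 1)"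
    by (simp add: vec_eq_iff e_def cmat_diag_mult) (auto simp: field_simps)
  have "nu (cmat_diag (x(k := of_real a * x k))) \<le>
        nu (cmat_scale (of_real ((1 + a) / 2)) (cmat_diag x)) +
        nu (cmat_scale (of_real ((1 - a) / 2)) (cmat_diag e ** cmat_diag x ** mat 1))"
    unfolding eq by (rule is_cmat_norm_triangle[OF n])
  also have "\<dots> = \<bar>(1 + a) / 2\<bar> * nu (cmat_diag x) + \<bar>(1 - a) / 2\<bar> * nu (cmat_diag e ** cmat_diag x ** mat 1)"
    by (simp only: is_cmat_norm_scale_real[OF n])
  also have "nu (cmat_diag e ** cmat_diag x ** mat 1) = nu (cmat_diag x)"
    by (rule unitarily_invariant_norm_mult[OF nu e cmat_unitary_mat1])
  also have "\<bar>(1 + a) / 2\<bar> * nu (cmat_diag x) + \<bar>(1 - a) / 2\<bar> * nu (cmat_diag x) = nu (cmat_diag x)"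
    using assms(2) by (simp add: abs_if field_simps split: if_splits)
  finally show ?thesis .
qed

lemma unitarily_invariant_norm_diag_contract:
  assumes nu: "unitarily_invariant_norm nu" and a: "\<And>i. \<bar>a i\<bar> \<le> 1"
  shows "nu (cmat_diag (\<lambda>i. of_real (a i) * x i)) \<le> nu (cmat_diag x)"
proof -
  have "nu (cmat_diag (\<lambda>i. if i \<in> F then of_real (a i) * x i else x i)) \<le> nu (cmat_diag x)"
    if "finite F" for F
    using that
  proof (induct F rule: finite_induct)
    case (insert k F)
    let ?y = "\<lambda>i. if i \<in> F then of_real (a i) * x i else x i"
    have "(\<lambda>i. if i \<in> insert k F then of_real (a i) * x i else x i) = ?y(k := of_real (a k) * ?y k)"
      using insert(2) by (auto simp: fun_eq_iff)
    then show ?case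
      using unitarily_invariant_norm_diag_scale_le[OF nu a[of k], of ?y k] insert(3) by simp
  qed simp
  from this[of UNIV] show ?thesis
    by simp
qed

lemma unitarily_invariant_norm_diag_bump:
  fixes nu :: "'n::finite cmat \<Rightarrow> real"
  assumes nu: "unitarily_invariant_norm nu" and "c > 1"
  shows "nu (mat 1) < nu (cmat_diag ((\<lambda>_. 1)(j := of_real c)))"
proof -
  \<comment> \<open>averaging the conjugates by the transpositions \<open>(i j)\<close> gives \<open>(n - 1 + c)/n\<close> times the identity\<close>
  have n: "is_cmat_norm nu"
    using nu by (rule unitarily_invariant_norm_is_cmat_norm)
  define y where "y = (\<lambda>_. 1)(j := complex_of_real c)"
  define P where "P i = perm_cmat (Transposition.transpose i j)" for i
  let ?n = "real CARD('n)"
  have P: "cmat_unitary (P i)" for i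
    by (simp add: P_def cmat_unitary_perm_cmat)
  have "(\<Sum>i\<in>UNIV. y (Transposition.transpose i j k)) = of_real (?n - 1 + c)" for k
  proof -
    have "(\<Sum>i\<in>UNIV. y (Transposition.transpose i j k)) = (\<Sum>i\<in>UNIV. if i = k then of_real c else 1)"
      by (rule sum.cong) (auto simp: y_def Transposition.transpose_def)
    also have "\<dots> = of_real c + of_nat (card (UNIV - {k}))"
      by (subst sum.remove[of _ k]) auto
    finally show ?thesis
      by (simp add: card_Diff_singleton of_nat_diff)
  qed
  then have avg: "(\<Sum>i\<in>UNIV. P i ** cmat_diag y ** cmat_adjoint (P i)) = cmat_scale (of_real (?n - 1 + c)) (mat 1)"
    by (simp add: P_def perm_cmat_conj_diag cmat_diag_sum cmat_diag_const cmat_scale_mat)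
  have "(?n - 1 + c) * nu (mat 1) = nu (cmat_scale (of_real (?n - 1 + c)) (mat 1 :: 'n cmat))"
    unfolding is_cmat_norm_scale_real[OF n] using assms(2) by (simp add: Suc_leI)
  also have "\<dots> \<le> (\<Sum>i\<in>UNIV. nu (P i ** cmat_diag y ** cmat_adjoint (P i)))"
    unfolding avg[symmetric] by (rule is_cmat_norm_sum[OF n])
  also have "\<dots> = ?n * nu (cmat_diag y)"
    by (simp add: unitarily_invariant_norm_mult[OF nu P cmat_unitary_adjoint[OF P]])
  finally have "(?n - 1 + c) * nu (mat 1) \<le> ?n * nu (cmat_diag y)" .
  moreover have "?n * nu (mat 1 :: 'n cmat) < (?n - 1 + c) * nu (mat 1)"
    using is_cmat_norm_mat1_pos[OF n] assms(2) by simp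
  ultimately have "?n * nu (mat 1) < ?n * nu (cmat_diag y)"
    by linarith
  then show ?thesis
    by (simp add: y_def mult_less_cancel_left)
qed

lemma unitarily_invariant_norm_diag_gt_mat1:
  fixes c :: "'n::finite \<Rightarrow> real"
  assumes nu: "unitarily_invariant_norm nu" and c: "\<And>i. c i \<ge> 1" and "c j > 1"
  shows "nu (mat 1 :: 'n cmat) < nu (cmat_diag (\<lambda>i. of_real (c i)))"
proof -
  define a where "a i = (if i = j then 1 else 1 / c i)" for i
  have "\<bar>a i\<bar> \<le> 1" for i
    using c[of i] by (simp add: a_def)
  moreover have "(\<lambda>i. of_real (a i) * of_real (c i)) = (\<lambda>_. 1)(j := complex_of_real (c j))"
    using c by (auto simp: fun_eq_iff a_def) (metis not_one_le_zero)
  ultimately have "nu (cmat_diag ((\<lambda>_. 1)(j := complex_of_real (c j)))) \<le> nu (cmat_diag (\<lambda>i. of_real (c i)))"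
    using unitarily_invariant_norm_diag_contract[OF nu, of a "\<lambda>i. of_real (c i)"] by simp
  then show ?thesis
    using unitarily_invariant_norm_diag_bump[OF nu \<open>c j > 1\<close>, of j] by linarith
qed

lemma arith_mean_inverse_ge_1:
  fixes s :: real
  assumes "s > 0"
  shows "1 \<le> (s + 1 / s) / 2" and "s \<noteq> 1 \<Longrightarrow> 1 < (s + 1 / s) / 2"
proof -
  have eq: "(s + 1 / s) / 2 = 1 + (s - 1)\<^sup>2 / (2 * s)"
    using assms by (simp add: field_simps power2_eq_square)
  show "1 \<le> (s + 1 / s) / 2"
    unfolding eq using assms by simp
  show "s \<noteq> 1 \<Longrightarrow> 1 < (s + 1 / s) / 2"
    unfolding eq using assms by simp
qed

lemma unitarily_invariant_norm_diag_eq_mat1: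
  fixes s :: "'n::finite \<Rightarrow> real"
  assumes nu: "unitarily_invariant_norm nu" and s: "\<And>i. s i > 0"
    and le: "nu (cmat_diag (\<lambda>i. of_real (s i))) \<le> nu (mat 1)"
      "nu (cmat_diag (\<lambda>i. of_real (1 / s i))) \<le> nu (mat 1)"
  shows "s i = 1"
proof (rule ccontr)
  \<comment> \<open>the entries \<open>(s\<^sub>i + 1/s\<^sub>i)/2\<close> of the mean are \<open>\<ge> 1\<close>, with equality only for \<open>s\<^sub>i = 1\<close>\<close>
  assume "s i \<noteq> 1"
  have n: "is_cmat_norm nu"
    using nu by (rule unitarily_invariant_norm_is_cmat_norm)
  define c where "c k = (s k + 1 / s k) / 2" for k
  have "c k \<ge> 1" "c i > 1" for k
    using arith_mean_inverse_ge_1[OF s] \<open>s i \<noteq> 1\<close> by (auto simp: c_def)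
  then have "nu (mat 1 :: 'n cmat) < nu (cmat_diag (\<lambda>k. of_real (c k)))"
    by (rule unitarily_invariant_norm_diag_gt_mat1[OF nu])
  also have "cmat_diag (\<lambda>k. of_real (c k)) =
      cmat_scale (of_real (1/2)) (cmat_diag (\<lambda>k. of_real (s k))) +
      cmat_scale (of_real (1/2)) (cmat_diag (\<lambda>k. of_real (1 / s k)))"
    by (simp add: vec_eq_iff c_def field_simps)
  also have "nu \<dots> \<le> \<bar>1/2\<bar> * nu (cmat_diag (\<lambda>k. of_real (s k))) + \<bar>1/2\<bar> * nu (cmat_diag (\<lambda>k. of_real (1 / s k)))"
    by (simp only: flip: is_cmat_norm_scale_real[OF n]) (rule is_cmat_norm_triangle[OF n])
  also have "\<dots> \<le> nu (mat 1)"
    using le by simp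
  finally show False
    by simp
qed

section \<open>Involutions of norm one are Hermitian\<close>

lemma invertible_gram_diag_pos:
  fixes G :: "'n::finite cmat"
  assumes "invertible G"
  shows "\<exists>t>0. (cmat_adjoint G ** G) $ i $ i = of_real t"
proof -
  define t where "t = (\<Sum>k\<in>UNIV. (cmod (G $ k $ i))\<^sup>2)"
  have "(cmat_adjoint G ** G) $ i $ i = (\<Sum>k\<in>UNIV. cnj (G $ k $ i) * G $ k $ i)"
    by (simp add: matrix_matrix_mult_nth)
  also have "\<dots> = of_real t"
    by (simp only: t_def of_real_sum complex_norm_square mult.commute)
  finally have Gt: "(cmat_adjoint G ** G) $ i $ i = of_real t" .
  obtain G' where G': "G' ** G = mat 1"
    using assms by (auto simp: invertible_def)
  have "t \<noteq> 0"
  proof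
    assume "t = 0"
    then have "(G' ** G) $ i $ i = 0"
      by (simp add: t_def sum_nonneg_eq_0_iff matrix_matrix_mult_nth)
    then show False
      using G' by (simp add: mat_nth)
  qed
  then have "t > 0"
    by (simp add: t_def sum_nonneg order_le_neq_trans)
  then show ?thesis
    using Gt by blast
qed

lemma invertible_cmat_svd:
  fixes S :: "'n::finite cmat"
  assumes "invertible S"
  shows "\<exists>U V s. cmat_unitary U \<and> cmat_unitary V \<and> (\<forall>i. 0 < s i) \<and>
                 S = U ** cmat_diag (\<lambda>i. of_real (s i)) ** V"
proof -
  have "cmat_normal (cmat_adjoint S ** S)"
    by (simp add: cmat_normal_def cmat_adjoint_mult)
  then obtain W d where W: "cmat_unitary W"
    and "cmat_adjoint S ** S = W ** cmat_diag d ** cmat_adjoint W"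
    using normal_unitarily_diagonalizable by blast
  \<comment> \<open>the columns of \<open>G = S W\<close> are orthogonal, with squared lengths \<open>d\<^sub>i > 0\<close>\<close>
  define G where "G = S ** W"
  have dG: "cmat_diag d = cmat_adjoint G ** G"
    using cmat_unitary_conj_cancel[OF W, of "cmat_diag d"]
    by (simp add: G_def \<open>cmat_adjoint S ** S = _\<close>[symmetric] cmat_adjoint_mult matrix_mul_assoc)
  have "invertible W"
    using W unfolding cmat_unitary_def invertible_def by blast
  then have "invertible G"
    unfolding G_def by (rule invertible_mult[OF assms])
  then have "\<exists>t>0. d i = of_real t" for i
    using invertible_gram_diag_pos[of G i] by (simp flip: dG)
  then obtain t where t: "\<And>i. t i > 0" and dt: "\<And>i. d i = of_real (t i)"
    by metis
  define s where "s i = sqrt (t i)" for i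
  have s: "s i > 0" "s i * s i = t i" "t i \<noteq> 0" for i
    using t[of i] by (simp_all add: s_def)
  define U where "U = G ** cmat_diag (\<lambda>i. of_real (1 / s i))"
  have "cmat_adjoint U ** U =
        cmat_diag (\<lambda>i. of_real (1 / s i)) ** (cmat_adjoint G ** G) ** cmat_diag (\<lambda>i. of_real (1 / s i))"
    by (simp add: U_def cmat_adjoint_mult cmat_adjoint_diag matrix_mul_assoc)
  also have "\<dots> = cmat_diag (\<lambda>i. of_real (1 / s i) * d i * of_real (1 / s i))"
    by (simp only: dG[symmetric] cmat_diag_mult)
  also have "\<dots> = mat 1"
    using s by (simp add: dt cmat_diag_const field_simps flip: of_real_mult)
  finally have U: "cmat_unitary U"
    by (simp add: cmat_unitary_iff_left_inverse)
  have "U ** cmat_diag (\<lambda>i. of_real (s i)) ** cmat_adjoint W =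
        G ** (cmat_diag (\<lambda>i. of_real (1 / s i)) ** cmat_diag (\<lambda>i. of_real (s i))) ** cmat_adjoint W"
    by (simp only: U_def matrix_mul_assoc)
  also have "\<dots> = S ** (W ** cmat_adjoint W)"
    using s(1)[THEN less_imp_neq] by (simp add: G_def cmat_diag_mult cmat_diag_const matrix_mul_assoc flip: of_real_mult)
  finally have "S = U ** cmat_diag (\<lambda>i. of_real (s i)) ** cmat_adjoint W"
    using W by (simp add: cmat_unitary_right_inverse)
  then show ?thesis
    using U W s(1) cmat_unitary_adjoint by blast
qed

lemma involution_hermitian_if_norm_eq_mat1:
  fixes S :: "'n::finite cmat"
  assumes nu: "unitarily_invariant_norm nu" and SS: "S ** S = mat 1" and "nu S = nu (mat 1)"
  shows "cmat_adjoint S = S"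
proof -
  \<comment> \<open>\<open>S\<close> and \<open>S\<^sup>-\<^sup>1 = S\<close> have singular values \<open>s\<^sub>i\<close> and \<open>1/s\<^sub>i\<close>, all of the same norm as \<open>I\<close>\<close>
  have "invertible S"
    using SS by (auto simp: invertible_def)
  then obtain U V s where U: "cmat_unitary U" and V: "cmat_unitary V" and s: "\<And>i. 0 < s i"
    and S: "S = U ** cmat_diag (\<lambda>i. of_real (s i)) ** V"
    using invertible_cmat_svd by blast
  define D where "D = cmat_diag (\<lambda>i. of_real (s i))"
  define D' where "D' = cmat_diag (\<lambda>i. of_real (1 / s i))"
  have "cmat_adjoint U ** S ** cmat_adjoint V = (cmat_adjoint U ** U) ** D ** (V ** cmat_adjoint V)"
    by (simp add: S D_def matrix_mul_assoc)
  then have D: "cmat_adjoint U ** S ** cmat_adjoint V = D"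
    using U V by (simp add: cmat_unitary_left_inverse cmat_unitary_right_inverse)
  have "D ** (V ** S ** U) = cmat_adjoint U ** (S ** (cmat_adjoint V ** V) ** S) ** U"
    by (simp only: D[symmetric] matrix_mul_assoc)
  also have "\<dots> = mat 1"
    using U V SS by (simp add: cmat_unitary_left_inverse)
  finally have "D ** (V ** S ** U) = mat 1" .
  moreover have "D' ** D = mat 1"
    using s[THEN less_imp_neq] by (simp add: D_def D'_def cmat_diag_mult cmat_diag_const flip: of_real_mult)
  ultimately have D': "V ** S ** U = D'"
    by (metis matrix_mul_assoc matrix_mul_lid matrix_mul_rid)
  have "nu D = nu S"
    unfolding D[symmetric]
    by (rule unitarily_invariant_norm_mult[OF nu cmat_unitary_adjoint[OF U] cmat_unitary_adjoint[OF V]])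
  moreover have "nu D' = nu S"
    unfolding D'[symmetric] by (rule unitarily_invariant_norm_mult[OF nu V U])
  ultimately have "nu (cmat_diag (\<lambda>i. of_real (s i))) \<le> nu (mat 1)"
    and "nu (cmat_diag (\<lambda>i. of_real (1 / s i))) \<le> nu (mat 1)"
    using \<open>nu S = nu (mat 1)\<close> by (simp_all only: D_def D'_def order_refl)
  then have "s i = 1" for i
    by (rule unitarily_invariant_norm_diag_eq_mat1[where s = s, OF nu s])
  then have "S = U ** V"
    by (simp add: S cmat_diag_const)
  then have "cmat_adjoint S ** S = mat 1"
    using U V cmat_unitary_mult cmat_unitary_left_inverse by blast
  then show ?thesis
    by (metis SS matrix_mul_assoc matrix_mul_rid)
qed

section \<open>Ranks of projections\<close>

lemma rank_mult_left_le: "rank (M ** X) \<le> rank X" for M X :: "'n::finite cmat"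
  unfolding row_rank_def_gen
proof (rule vec.subset_le_dim, rule subsetI)
  fix r
  assume "r \<in> rows (M ** X)"
  then obtain i where r: "r = row i (M ** X)"
    by (auto simp: rows_def)
  have "row i (M ** X) = (\<Sum>k\<in>UNIV. M $ i $ k *s row k X)"
    by (simp add: vec_eq_iff row_def matrix_matrix_mult_nth sum_component)
  also have "\<dots> \<in> vec.span (rows X)"
    by (intro vec.span_sum vec.span_scale vec.span_base) (auto simp: rows_def)
  finally show "r \<in> vec.span (rows X)"
    using r by simp
qed

lemma rank_mult_right_le: "rank (X ** M) \<le> rank X" for M X :: "'n::finite cmat"
proof -
  have "row i (X ** M) = transpose M *v row i X" for i
    by (simp add: vec_eq_iff row_def matrix_matrix_mult_nth matrix_vector_mult_def transpose_def
        mult.commute)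
  then have "rows (X ** M) = (\<lambda>r. transpose M *v r) ` rows X"
    by (auto simp: rows_def)
  then show ?thesis
    unfolding row_rank_def_gen
    using vec.dim_image_le[OF matrix_vector_mul_linear_gen, of "transpose M" "rows X"] by simp
qed

lemma rank_unitary_conj:
  assumes "cmat_unitary V"
  shows "rank (V ** X ** cmat_adjoint V) = rank X"
proof (rule antisym)
  show "rank (V ** X ** cmat_adjoint V) \<le> rank X"
    using rank_mult_right_le[of "V ** X" "cmat_adjoint V"] rank_mult_left_le[of V X] by simp
  have "rank X = rank (cmat_adjoint V ** (V ** X ** cmat_adjoint V) ** V)"
    by (simp add: cmat_unitary_conj_cancel[OF assms])
  also have "\<dots> \<le> rank (V ** X ** cmat_adjoint V)"
    using rank_mult_right_le rank_mult_left_le order_trans by blast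
  finally show "rank X \<le> rank (V ** X ** cmat_adjoint V)" .
qed

lemma rank_diag_indicator: "rank (cmat_diag (\<lambda>i::'n::finite. if i \<in> T then 1 else 0)) = card T"
proof -
  let ?D = "cmat_diag (\<lambda>i::'n. if i \<in> T then 1 else 0)"
  define B where "B = (\<lambda>i. axis i (1::complex)) ` T"
  have "row i ?D = (if i \<in> T then axis i 1 else 0)" for i
    by (auto simp: vec_eq_iff row_def axis_def)
  then have "B \<subseteq> rows ?D" and "rows ?D \<subseteq> insert 0 B"
    by (auto simp: B_def rows_def)
  then have "vec.dim (rows ?D) = vec.dim B"
    by (metis antisym vec.dim_insert vec.dim_subset vec.span_zero)
  also have "\<dots> = card B"
    by (rule vec.dim_eq_card_independent, rule vec.independent_mono[OF independent_cart_basis])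
      (auto simp: B_def cart_basis_def)
  also have "\<dots> = card T"
    unfolding B_def by (rule card_image) (auto simp: inj_on_def axis_eq_axis)
  finally show ?thesis
    by (simp add: row_rank_def_gen)
qed

lemma cmat_projection_unitary_conj_diag_indicator:
  assumes "cmat_unitary V"
  shows "cmat_projection (V ** cmat_diag (\<lambda>i. if i \<in> T then 1 else 0) ** cmat_adjoint V)"
proof -
  let ?e = "\<lambda>i. if i \<in> T then (1::complex) else 0"
  have "(\<lambda>i. ?e i * ?e i) = ?e" and "(\<lambda>i. cnj (?e i)) = ?e"
    by auto
  then show ?thesis
    unfolding cmat_projection_def cmat_unitary_conj_mult[OF assms]
    by (simp add: cmat_diag_mult cmat_adjoint_mult cmat_adjoint_diag matrix_mul_assoc)
qed

section \<open>Matrices whose polynomials have the norms of those of a normal matrix\<close>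

lemma exists_inj_if_fiber_card_eq:
  fixes a b :: "'n::finite \<Rightarrow> 'b"
  assumes "\<And>l. card {i. a i = l} = card {i. b i = l}"
  shows "\<exists>\<sigma>. inj \<sigma> \<and> (\<forall>i. a i = b (\<sigma> i))"
proof -
  have "\<exists>h. bij_betw h {i. a i = l} {i. b i = l}" for l
    using assms by (intro finite_same_card_bij) auto
  then obtain h where h: "\<And>l. bij_betw (h l) {i. a i = l} {i. b i = l}"
    by metis
  define \<sigma> where "\<sigma> i = h (a i) i" for i
  have b: "b (\<sigma> i) = a i" for i
    using bij_betw_apply[OF h[of "a i"], of i] by (simp add: \<sigma>_def)
  have "inj \<sigma>"
  proof (rule injI)
    fix i j
    assume e: "\<sigma> i = \<sigma> j"
    then have "a i = a j"
      using b by metis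
    moreover have "inj_on (h (a i)) {k. a k = a i}"
      using h bij_betw_imp_inj_on by blast
    ultimately show "i = j"
      using e unfolding \<sigma>_def by (auto dest: inj_onD)
  qed
  then show ?thesis
    using b by metis
qed

definition lagrange_basis :: "complex set \<Rightarrow> complex \<Rightarrow> complex poly" where
  "lagrange_basis L l = (\<Prod>m\<in>L - {l}. smult (1 / (l - m)) [:-m, 1:])"

lemma poly_lagrange_basis:
  assumes "finite L" and "x \<in> L"
  shows "poly (lagrange_basis L l) x = (if x = l then 1 else 0)"
proof -
  have "poly (lagrange_basis L l) x = (\<Prod>m\<in>L - {l}. (x - m) / (l - m))"
    unfolding lagrange_basis_def poly_prod by (rule prod.cong) (auto simp: diff_divide_distrib)
  then show ?thesis
    using assms by (auto simp: prod_zero_iff)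
qed

context
  fixes nu :: "'n::finite cmat \<Rightarrow> real" and A N U :: "'n cmat" and d :: "'n \<Rightarrow> complex"
  assumes nu: "unitarily_invariant_norm nu"
    and poly_norms: "\<forall>p. nu (cmat_poly p A) = nu (cmat_poly p N)"
    and U: "cmat_unitary U" and N: "N = U ** cmat_diag d ** cmat_adjoint U"
begin

lemma cmat_poly_eq_if_agree_on_eigenvalues:
  assumes "\<And>i. poly p (d i) = poly q (d i)"
  shows "cmat_poly p A = cmat_poly q A"
proof -
  have n: "is_cmat_norm nu"
    using nu by (rule unitarily_invariant_norm_is_cmat_norm)
  have "cmat_poly (p - q) N = 0"
    using assms by (simp add: N cmat_poly_unitary_conj_diag[OF U] poly_diff)
  then have "nu (cmat_poly (p - q) A) = 0"
    using poly_norms is_cmat_norm_eq_0_iff[OF n] by simp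
  then show ?thesis
    by (simp add: is_cmat_norm_eq_0_iff[OF n] cmat_poly_diff)
qed

lemma lagrange_basis_hermitian:
  assumes "l \<in> range d"
  shows "cmat_adjoint (cmat_poly (lagrange_basis (range d) l) A) = cmat_poly (lagrange_basis (range d) l) A"
proof -
  define E where "E = cmat_poly (lagrange_basis (range d) l) A"
  define r where "r = smult 2 (lagrange_basis (range d) l) - 1"
  have r: "poly r (d i) = (if d i = l then 1 else -1)" for i
    using poly_lagrange_basis[of "range d" "d i" l] by (simp add: r_def)
  have "cmat_poly r A ** cmat_poly r A = cmat_poly 1 A"
    by (simp only: cmat_poly_mult[symmetric]) (rule cmat_poly_eq_if_agree_on_eigenvalues, simp add: r)
  moreover have "cmat_unitary (cmat_poly r N)"
    unfolding N cmat_poly_unitary_conj_diag[OF U] using U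
    by (intro cmat_unitary_mult cmat_unitary_diag cmat_unitary_adjoint) (simp_all add: r)
  then have "nu (cmat_poly r A) = nu (mat 1)"
    using poly_norms unitarily_invariant_norm_unitary[OF nu] by simp
  ultimately have "cmat_adjoint (cmat_poly r A) = cmat_poly r A"
    using involution_hermitian_if_norm_eq_mat1[OF nu] by (simp add: cmat_poly_1)
  moreover have "cmat_poly r A = cmat_scale 2 E - mat 1"
    by (simp add: r_def E_def cmat_poly_diff cmat_poly_smult cmat_poly_1)
  ultimately have "cmat_scale 2 (cmat_adjoint E) = cmat_scale 2 E"
    by (simp add: cmat_adjoint_diff cmat_adjoint_scale cmat_adjoint_mat)
  then have "cmat_scale (1/2) (cmat_scale 2 (cmat_adjoint E)) = cmat_scale (1/2) (cmat_scale 2 E)"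
    by simp
  then show ?thesis
    by (simp add: cmat_scale_scale E_def)
qed

lemma adjoint_eq_cmat_poly: "\<exists>q. cmat_adjoint A = cmat_poly q A"
proof -
  let ?L = "range d"
  let ?E = "\<lambda>l. cmat_poly (lagrange_basis ?L l) A"
  have "A = cmat_poly [:0, 1:] A"
    by (simp add: cmat_poly_x)
  also have "\<dots> = cmat_poly (\<Sum>l\<in>?L. smult l (lagrange_basis ?L l)) A"
    by (rule cmat_poly_eq_if_agree_on_eigenvalues)
      (simp add: poly_sum poly_lagrange_basis if_distrib cong: if_cong)
  finally have A: "A = (\<Sum>l\<in>?L. cmat_scale l (?E l))"
    by (simp add: cmat_poly_sum cmat_poly_smult)
  have "cmat_adjoint A = (\<Sum>l\<in>?L. cmat_scale (cnj l) (cmat_adjoint (?E l)))"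
    by (subst (1) A) (simp add: cmat_adjoint_sum cmat_adjoint_scale)
  also have "\<dots> = (\<Sum>l\<in>?L. cmat_scale (cnj l) (?E l))"
    by (rule sum.cong) (simp_all add: lagrange_basis_hermitian)
  also have "\<dots> = cmat_poly (\<Sum>l\<in>?L. smult (cnj l) (lagrange_basis ?L l)) A"
    by (simp add: cmat_poly_sum cmat_poly_smult)
  finally show ?thesis ..
qed

lemma normal_if_poly_norms_eq: "cmat_normal A"
proof -
  obtain q where "cmat_adjoint A = cmat_poly q A"
    using adjoint_eq_cmat_poly by blast
  then show ?thesis
    unfolding cmat_normal_def using cmat_poly_commute[of "[:0, 1:]" A q] by (simp add: cmat_poly_x)
qed

context
  fixes V :: "'n cmat" and a :: "'n \<Rightarrow> complex"
  assumes V: "cmat_unitary V" and A: "A = V ** cmat_diag a ** cmat_adjoint V"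
begin

lemma eigenvalue_mem_range: "a i \<in> range d"
proof -
  \<comment> \<open>the polynomial vanishing exactly on the eigenvalues of \<open>N\<close> annihilates \<open>A\<close>\<close>
  define m where "m = (\<Prod>\<mu>\<in>range d. [:-\<mu>, 1:])"
  have "cmat_poly m A = cmat_poly 0 A"
    by (rule cmat_poly_eq_if_agree_on_eigenvalues) (simp add: m_def poly_prod)
  then have "cmat_diag (\<lambda>i. poly m (a i)) = 0"
    using cmat_unitary_conj_cancel[OF V, of "cmat_diag (\<lambda>i. poly m (a i))"]
    by (simp add: A cmat_poly_unitary_conj_diag[OF V])
  then show ?thesis
    by (simp add: cmat_diag_eq_0_iff m_def poly_prod)
qed

lemma eigenvalue_multiplicity_eq:
  assumes "separates_projections_by_rank nu"
  shows "card {i. a i = l} = card {i. d i = l}"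
proof (cases "l \<in> range d")
  case False
  then have "{i. a i = l} = {}" and "{i. d i = l} = {}"
    using eigenvalue_mem_range by auto
  then show ?thesis
    by simp
next
  case True
  let ?E = "lagrange_basis (range d) l"
  have EA: "cmat_poly ?E A = V ** cmat_diag (\<lambda>i. if i \<in> {i. a i = l} then 1 else 0) ** cmat_adjoint V"
    using poly_lagrange_basis[OF _ eigenvalue_mem_range] by (simp add: A cmat_poly_unitary_conj_diag[OF V])
  have EN: "cmat_poly ?E N = U ** cmat_diag (\<lambda>i. if i \<in> {i. d i = l} then 1 else 0) ** cmat_adjoint U"
    using poly_lagrange_basis[of "range d" "d _" l] by (simp add: N cmat_poly_unitary_conj_diag[OF U])
  have "cmat_projection (cmat_poly ?E A)" and "cmat_projection (cmat_poly ?E N)"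
    unfolding EA EN by (intro cmat_projection_unitary_conj_diag_indicator U V)+
  then have "rank (cmat_poly ?E A) = rank (cmat_poly ?E N)"
    using assms poly_norms unfolding separates_projections_by_rank_def by blast
  then show ?thesis
    unfolding EA EN rank_unitary_conj[OF V] rank_unitary_conj[OF U] rank_diag_indicator .
qed

lemma unitarily_similar_if_poly_norms_eq:
  assumes "separates_projections_by_rank nu"
  shows "unitarily_similar A N"
proof -
  obtain \<sigma> where \<sigma>: "inj \<sigma>" "\<forall>i. a i = d (\<sigma> i)"
    using exists_inj_if_fiber_card_eq eigenvalue_multiplicity_eq[OF assms] by blast
  define W where "W = V ** perm_cmat \<sigma> ** cmat_adjoint U"
  have W: "cmat_unitary W"
    unfolding W_def by (intro cmat_unitary_mult V cmat_unitary_perm_cmat \<sigma>(1) cmat_unitary_adjoint U)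
  have "a = (\<lambda>i. d (\<sigma> i))"
    using \<sigma>(2) by auto
  then have "cmat_diag a = perm_cmat \<sigma> ** (cmat_adjoint U ** N ** U) ** cmat_adjoint (perm_cmat \<sigma>)"
    by (simp add: N cmat_unitary_conj_cancel[OF U] perm_cmat_conj_diag[OF \<sigma>(1)])
  then have "A = W ** N ** cmat_adjoint W"
    by (simp add: A W_def cmat_adjoint_mult matrix_mul_assoc)
  then show ?thesis
    unfolding unitarily_similar_def using W by blast
qed

end

end

theorem theorem2p4:
  fixes nu :: "'n::finite cmat \<Rightarrow> real" and A N :: "'n cmat"
  assumes "unitarily_invariant_norm nu"
    and "cmat_normal N"
    and "\<forall>p. nu (cmat_poly p A) = nu (cmat_poly p N)"
  shows "cmat_normal A \<and>
         (separates_projections_by_rank nu \<longrightarrow> unitarily_similar A N)"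
proof -
  obtain U d where "cmat_unitary U" "N = U ** cmat_diag d ** cmat_adjoint U"
    using normal_unitarily_diagonalizable[OF assms(2)] by blast
  note hyps = assms(1,3) this
  then have "cmat_normal A"
    by (rule normal_if_poly_norms_eq)
  then obtain V a where "cmat_unitary V" "A = V ** cmat_diag a ** cmat_adjoint V"
    using normal_unitarily_diagonalizable by blast
  then show ?thesis
    using unitarily_similar_if_poly_norms_eq[OF hyps] \<open>cmat_normal A\<close> by blast
qed

end
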